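(* Let $G_1,\dots,G_n,H$ be non-trivial groups such that each $G_i$ is centreless and directly indecomposable, and such that $H$ has no direct factor isomorphic to any $G_i$. Let $G=G_1\times\cdots\times G_n$. Then the automorphisms of $G\times H$ are exactly the maps $(g,h)\mapsto(\alpha(g),\gamma(g)\delta(h))$ with $\alpha\in\operatorname{Aut}(G)$, $\delta\in\operatorname{Aut}(H)$ and $\gamma\in\operatorname{Hom}(G,Z(H))$. In particular, $1\times H$ is characteristic in $G\times H$.
   Context: A group $A$ is directly indecomposable if $A\cong B\times C$ implies $B=1$ or $C=1$. $H$ has a direct factor isomorphic to $A$ if $H\cong A\times N$ for some group $N$. *)

theory Defs
  imports "HOL-Algebra.Algebra"
begin

definition center :: "('a, 'b) monoid_scheme \<Rightarrow> 'a set" where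
  "center G = {z \<in> carrier G. \<forall>g \<in> carrier G. z \<otimes>\<^bsub>G\<^esub> g = g \<otimes>\<^bsub>G\<^esub> z}"

definition centreless :: "('a, 'b) monoid_scheme \<Rightarrow> bool" where
  "centreless G \<longleftrightarrow> center G = {\<one>\<^bsub>G\<^esub>}"

definition nontrivial_group :: "('a, 'b) monoid_scheme \<Rightarrow> bool" where
  "nontrivial_group G \<longleftrightarrow> carrier G \<noteq> {\<one>\<^bsub>G\<^esub>}"

text \<open>A is directly indecomposable: A \<cong> B \<times> C implies B = 1 or C = 1.
  The factors B, C are taken with elements of the same type as A (every direct
  factor embeds into A, so this loses no generality).\<close>
definition directly_indecomposable :: "('a, 'b) monoid_scheme \<Rightarrow> bool" where
  "directly_indecomposable A \<longleftrightarrow>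
     (\<forall>(B :: 'a monoid) (C :: 'a monoid). group B \<longrightarrow> group C \<longrightarrow> A \<cong> B \<times>\<times> C \<longrightarrow>
        carrier B = {\<one>\<^bsub>B\<^esub>} \<or> carrier C = {\<one>\<^bsub>C\<^esub>})"

text \<open>H has a direct factor isomorphic to A: H \<cong> A \<times> N for some group N
  (N taken with elements of the type of H's elements; N embeds into H).\<close>
definition has_direct_factor_iso :: "('b, 'c) monoid_scheme \<Rightarrow> ('a, 'd) monoid_scheme \<Rightarrow> bool" where
  "has_direct_factor_iso H A \<longleftrightarrow> (\<exists>N :: 'b monoid. group N \<and> H \<cong> A \<times>\<times> N)"

end

theory Submission
  imports Defs
begin

(* The heart of the matter is that every automorphism \<phi> of G \<times> H maps 1 \<times> H into itself.
   Project \<phi>(1 \<times> H) to a factor G_i. The images of \<phi>(G \<times> 1) and \<phi>(1 \<times> H) there are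
   commuting subgroups that together make up G_i; since G_i is centreless they meet trivially,
   so G_i is their internal direct product, and indecomposability kills one of them. Were it
   the image of G \<times> 1, projecting would give a retraction of H onto G_i whose section
   centralizes its kernel, i.e. G_i would be a direct factor of H. Hence 1 \<times> H is invariant,
   so \<phi>(g, h) = \<phi>(g, 1) \<phi>(1, h) = (\<alpha> g, \<gamma> g \<delta> h), where \<delta> is the restriction of \<phi> to H,
   \<alpha> is the map induced on (G \<times> H)/(1 \<times> H) = G, and \<gamma> has central image because G \<times> 1
   and 1 \<times> H commute. *)

section \<open>Direct products\<close>

lemma DirProd_inl_hom: "monoid H \<Longrightarrow> (\<lambda>x. (x, \<one>\<^bsub>H\<^esub>)) \<in> hom G (G \<times>\<times> H)"
  by (auto intro: homI simp: monoid.one_closed)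

lemma DirProd_inr_hom: "monoid G \<Longrightarrow> (\<lambda>y. (\<one>\<^bsub>G\<^esub>, y)) \<in> hom H (G \<times>\<times> H)"
  by (auto intro: homI simp: monoid.one_closed)

lemma DirProd_fst_hom: "monoid G \<Longrightarrow> monoid H \<Longrightarrow> fst \<in> hom (G \<times>\<times> H) G"
  by (auto intro: homI)

lemma DirProd_snd_hom: "monoid G \<Longrightarrow> monoid H \<Longrightarrow> snd \<in> hom (G \<times>\<times> H) H"
  by (auto intro: homI)

lemma DirProd_mult_inl_inr:
  assumes "monoid G" "monoid H" "x \<in> carrier G" "y \<in> carrier H"
  shows "(x, \<one>\<^bsub>H\<^esub>) \<otimes>\<^bsub>G \<times>\<times> H\<^esub> (\<one>\<^bsub>G\<^esub>, y) = (x, y)"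
    and "(\<one>\<^bsub>G\<^esub>, y) \<otimes>\<^bsub>G \<times>\<times> H\<^esub> (x, \<one>\<^bsub>H\<^esub>) = (x, y)"
  using assms by (simp_all add: monoid.l_one monoid.r_one)

lemma product_group_proj_hom: "i \<in> I \<Longrightarrow> (\<lambda>x. x i) \<in> hom (product_group I G) (G i)"
  by (auto intro!: homI)

lemma product_group_single_hom:
  assumes "i \<in> I" "\<And>j. j \<in> I \<Longrightarrow> group (G j)"
  shows "(\<lambda>g. \<lambda>j\<in>I. if j = i then g else \<one>\<^bsub>G j\<^esub>) \<in> hom (G i) (product_group I G)"
  using assms by (auto intro!: homI simp: group.is_monoid monoid.one_closed)

lemma product_group_single_commute:
  assumes "i \<in> I" "\<And>j. j \<in> I \<Longrightarrow> group (G j)"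
    and "g \<in> carrier (G i)" "x \<in> carrier (product_group I G)" "x i = \<one>\<^bsub>G i\<^esub>"
  shows "(\<lambda>j\<in>I. if j = i then g else \<one>\<^bsub>G j\<^esub>) \<otimes>\<^bsub>product_group I G\<^esub> x
       = x \<otimes>\<^bsub>product_group I G\<^esub> (\<lambda>j\<in>I. if j = i then g else \<one>\<^bsub>G j\<^esub>)"
  using assms by (auto simp: fun_eq_iff PiE_iff group.is_monoid monoid.l_one monoid.r_one)

section \<open>Internal direct decompositions\<close>

lemma commuting_subgroups_Int_center:
  fixes S (structure)
  assumes "group S" "subgroup A S" "subgroup B S" "A <#> B = carrier S"
    and comm: "\<And>a b. a \<in> A \<Longrightarrow> b \<in> B \<Longrightarrow> a \<otimes> b = b \<otimes> a"
  shows "A \<inter> B \<subseteq> center S"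
proof
  interpret group S by fact
  fix x assume x: "x \<in> A \<inter> B"
  have xS: "x \<in> carrier S" using x subgroup.subset[OF \<open>subgroup A S\<close>] by blast
  have "x \<otimes> (a \<otimes> b) = (a \<otimes> b) \<otimes> x" if "a \<in> A" "b \<in> B" for a b
  proof -
    have ab: "a \<in> carrier S" "b \<in> carrier S"
      using that subgroup.subset assms(2,3) by blast+
    have "x \<otimes> (a \<otimes> b) = a \<otimes> (x \<otimes> b)"
      using comm[of a x] that x ab xS by (simp flip: m_assoc)
    also have "\<dots> = (a \<otimes> b) \<otimes> x"
      using comm[of x b] that x ab xS by (simp add: m_assoc)
    finally show ?thesis .
  qed
  moreover have "\<exists>a\<in>A. \<exists>b\<in>B. g = a \<otimes> b" if "g \<in> carrier S" for g
    using that \<open>A <#> B = carrier S\<close> unfolding set_mult_def by blast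
  ultimately show "x \<in> center S"
    using xS unfolding center_def by blast
qed

lemma centreless_directly_indecomposable_commuting_subgroups:
  fixes S :: "'a monoid" (structure)
  assumes S: "group S" "centreless S" "directly_indecomposable S"
    and AB: "subgroup A S" "subgroup B S" "A <#> B = carrier S"
    and comm: "\<And>a b. a \<in> A \<Longrightarrow> b \<in> B \<Longrightarrow> a \<otimes> b = b \<otimes> a"
  shows "A = {\<one>} \<or> B = {\<one>}"
proof -
  interpret group_disjoint_sum S A B
    using S AB by (simp add: group_disjoint_sum_def)
  have "A \<inter> B = {\<one>}"
    using commuting_subgroups_Int_center[OF S(1) AB comm] S(2) AB
    unfolding centreless_def by (auto simp: subgroup.one_closed)
  then have "(\<lambda>(x, y). x \<otimes> y) \<in> iso (subgroup_generated S A \<times>\<times> subgroup_generated S B) S"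
    using AB comm by (auto simp: iso_group_mul_alt)
  then have "S \<cong> subgroup_generated S A \<times>\<times> subgroup_generated S B"
    by (simp add: is_isoI DirProd_group group.iso_sym)
  moreover have "group (subgroup_generated S A)" "group (subgroup_generated S B)"
    using S(1) by (simp_all add: group.group_subgroup_generated)
  ultimately have "carrier (subgroup_generated S A) = {\<one>} \<or> carrier (subgroup_generated S B) = {\<one>}"
    using S(3) unfolding directly_indecomposable_def by fastforce
  then show ?thesis
    using AB by (simp add: subgroup.carrier_subgroup_generated_subgroup)
qed

lemma has_direct_factor_isoI:
  fixes H :: "'b monoid" (structure)
  assumes "group H" "group S" "\<rho> \<in> hom H S" "\<sigma> \<in> hom S H"
    and retract: "\<And>s. s \<in> carrier S \<Longrightarrow> \<rho> (\<sigma> s) = s"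
    and comm: "\<And>s m. s \<in> carrier S \<Longrightarrow> m \<in> kernel H S \<rho> \<Longrightarrow> \<sigma> s \<otimes> m = m \<otimes> \<sigma> s"
  shows "has_direct_factor_iso H S"
proof -
  interpret H: group H by fact
  interpret S: group S by fact
  let ?A = "\<sigma> ` carrier S" and ?K = "kernel H S \<rho>"
  have "\<rho> \<circ> \<sigma> \<in> iso S S"
    using retract by (auto intro: S.iso_eq[OF id_iso])
  then have AK: "?A \<inter> ?K = {\<one>}" "?A <#> ?K = carrier H"
    using group_semidirect_sum_image_ker[OF assms(4,3)] assms(1,2) by simp_all
  interpret group_disjoint_sum H ?A ?K
    using assms by (simp add: group_disjoint_sum_def group_hom.img_is_subgroup group_hom.subgroup_kernel
        group_hom_def group_hom_axioms_def)
  have "(\<lambda>(x, y). x \<otimes> y) \<in> iso (subgroup_generated H ?A \<times>\<times> subgroup_generated H ?K) H"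
    using AK comm by (auto simp: iso_group_mul_alt)
  then have "subgroup_generated H ?A \<times>\<times> subgroup_generated H ?K \<cong> H"
    by (rule is_isoI)
  moreover have "inj_on \<sigma> (carrier S)"
    using retract by (metis inj_onI)
  then have "\<sigma> \<in> iso S (subgroup_generated H ?A)"
    using iso_onto_image[OF assms(2,1)] assms(4) by blast
  then have "S \<cong> subgroup_generated H ?A"
    by (rule is_isoI)
  then have "S \<times>\<times> subgroup_generated H ?K \<cong> subgroup_generated H ?A \<times>\<times> subgroup_generated H ?K"
    by (simp add: S.DirProd_iso_trans iso_refl)
  ultimately have "S \<times>\<times> subgroup_generated H ?K \<cong> H"
    by (rule iso_trans[rotated])
  then have "H \<cong> S \<times>\<times> subgroup_generated H ?K"
    by (simp add: DirProd_group group.iso_sym)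
  then show ?thesis
    unfolding has_direct_factor_iso_def using H.group_subgroup_generated by blast
qed

section \<open>Automorphisms preserve the second factor\<close>

lemma retract_of_DirProd_is_direct_factor:
  fixes H :: "'b monoid"
  assumes groups: "group K" "group H" "group S"
    and \<phi>: "\<phi> \<in> iso (K \<times>\<times> H) G"
    and p: "p \<in> hom G S" and \<tau>: "\<tau> \<in> hom S G"
    and retract: "\<And>s. s \<in> carrier S \<Longrightarrow> p (\<tau> s) = s"
    and centralizes: "\<And>s x. s \<in> carrier S \<Longrightarrow> x \<in> kernel G S p \<Longrightarrow> \<tau> s \<otimes>\<^bsub>G\<^esub> x = x \<otimes>\<^bsub>G\<^esub> \<tau> s"
    and first_trivial: "\<And>u. u \<in> carrier K \<Longrightarrow> p (\<phi> (u, \<one>\<^bsub>H\<^esub>)) = \<one>\<^bsub>S\<^esub>"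
  shows "has_direct_factor_iso H S"
proof -
  interpret K: group K by fact
  interpret H: group H by fact
  interpret S: group S by fact
  interpret KH: group "K \<times>\<times> H" by (simp add: DirProd_group groups)
  define \<psi> where "\<psi> = inv_into (carrier (K \<times>\<times> H)) \<phi>"
  have \<psi>: "\<psi> \<in> hom G (K \<times>\<times> H)"
    unfolding \<psi>_def using KH.iso_set_sym[OF \<phi>] by (rule iso_imp_homomorphism)
  have \<psi>\<phi>: "\<psi> (\<phi> y) = y" if "y \<in> carrier (K \<times>\<times> H)" for y
    unfolding \<psi>_def using \<phi> that by (simp add: iso_iff inv_into_f_f)
  have \<phi>\<psi>: "\<phi> (\<psi> x) = x" if "x \<in> carrier G" for x
    unfolding \<psi>_def using \<phi> that by (simp add: iso_iff f_inv_into_f)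
  have \<phi>_hom: "\<phi> \<in> hom (K \<times>\<times> H) G"
    using \<phi> by (rule iso_imp_homomorphism)
  define \<rho> where "\<rho> = (\<lambda>v. p (\<phi> (\<one>\<^bsub>K\<^esub>, v)))"
  define \<sigma> where "\<sigma> = (\<lambda>s. snd (\<psi> (\<tau> s)))"
  have q: "p \<circ> \<phi> \<in> hom (K \<times>\<times> H) S"
    using \<phi>_hom p by (rule hom_compose)
  have \<rho>_hom: "\<rho> \<in> hom H S"
    using hom_compose[OF DirProd_inr_hom[OF K.is_monoid] q] by (simp add: \<rho>_def o_def)
  have \<sigma>_hom: "\<sigma> \<in> hom S H"
    using hom_compose[OF hom_compose[OF \<tau> \<psi>] DirProd_snd_hom[OF K.is_monoid H.is_monoid]]
    by (simp add: \<sigma>_def o_def)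
  have \<psi>\<tau>: "\<exists>u \<in> carrier K. \<psi> (\<tau> s) = (u, \<sigma> s)" if "s \<in> carrier S" for s
    using hom_in_carrier[OF \<psi> hom_in_carrier[OF \<tau> that]] by (auto simp: \<sigma>_def)
  have "\<rho> (\<sigma> s) = s" if s: "s \<in> carrier S" for s
  proof -
    obtain u where u: "u \<in> carrier K" "\<psi> (\<tau> s) = (u, \<sigma> s)"
      using \<psi>\<tau>[OF s] by blast
    have \<sigma>s: "\<sigma> s \<in> carrier H"
      using \<sigma>_hom s by (rule hom_in_carrier)
    have "s = p (\<phi> (\<psi> (\<tau> s)))"
      using retract[OF s] \<phi>\<psi>[OF hom_in_carrier[OF \<tau> s]] by simp
    also have "\<dots> = (p \<circ> \<phi>) ((u, \<one>\<^bsub>H\<^esub>) \<otimes>\<^bsub>K \<times>\<times> H\<^esub> (\<one>\<^bsub>K\<^esub>, \<sigma> s))"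
      using u \<sigma>s by simp
    also have "\<dots> = p (\<phi> (u, \<one>\<^bsub>H\<^esub>)) \<otimes>\<^bsub>S\<^esub> \<rho> (\<sigma> s)"
      using hom_mult[OF q, of "(u, \<one>\<^bsub>H\<^esub>)" "(\<one>\<^bsub>K\<^esub>, \<sigma> s)"] u \<sigma>s by (simp add: \<rho>_def)
    also have "\<dots> = \<rho> (\<sigma> s)"
      using first_trivial[OF u(1)] hom_in_carrier[OF \<rho>_hom \<sigma>s] by simp
    finally show ?thesis by simp
  qed
  moreover have "\<sigma> s \<otimes>\<^bsub>H\<^esub> m = m \<otimes>\<^bsub>H\<^esub> \<sigma> s" if s: "s \<in> carrier S" and m: "m \<in> kernel H S \<rho>" for s m
  proof -
    have m': "(\<one>\<^bsub>K\<^esub>, m) \<in> carrier (K \<times>\<times> H)"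
      using m by (simp add: kernel_def)
    then have "\<phi> (\<one>\<^bsub>K\<^esub>, m) \<in> kernel G S p"
      using m hom_in_carrier[OF \<phi>_hom] by (simp add: kernel_def \<rho>_def)
    then have "\<tau> s \<otimes>\<^bsub>G\<^esub> \<phi> (\<one>\<^bsub>K\<^esub>, m) = \<phi> (\<one>\<^bsub>K\<^esub>, m) \<otimes>\<^bsub>G\<^esub> \<tau> s"
      using centralizes s by blast
    then have "\<psi> (\<tau> s) \<otimes>\<^bsub>K \<times>\<times> H\<^esub> (\<one>\<^bsub>K\<^esub>, m) = (\<one>\<^bsub>K\<^esub>, m) \<otimes>\<^bsub>K \<times>\<times> H\<^esub> \<psi> (\<tau> s)"
      using hom_mult[OF \<psi>] hom_in_carrier[OF \<tau> s] hom_in_carrier[OF \<phi>_hom m'] \<psi>\<phi>[OF m'] by metis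
    then show ?thesis
      using \<psi>\<tau>[OF s] by auto
  qed
  ultimately show ?thesis
    using has_direct_factor_isoI[OF groups(2,3) \<rho>_hom \<sigma>_hom] by blast
qed

lemma DirProd_epi_factor_images:
  assumes groups: "group K" "group H" "group S"
    and f: "f \<in> hom (K \<times>\<times> H) S" "f ` carrier (K \<times>\<times> H) = carrier S"
  defines "A \<equiv> (\<lambda>u. f (u, \<one>\<^bsub>H\<^esub>)) ` carrier K" and "C \<equiv> (\<lambda>v. f (\<one>\<^bsub>K\<^esub>, v)) ` carrier H"
  shows "subgroup A S" "subgroup C S" "A <#>\<^bsub>S\<^esub> C = carrier S"
    and "\<And>a c. a \<in> A \<Longrightarrow> c \<in> C \<Longrightarrow> a \<otimes>\<^bsub>S\<^esub> c = c \<otimes>\<^bsub>S\<^esub> a"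
proof -
  interpret K: group K by fact
  interpret H: group H by fact
  interpret S: group S by fact
  have "(\<lambda>u. f (u, \<one>\<^bsub>H\<^esub>)) \<in> hom K S"
    using hom_compose[OF DirProd_inl_hom[OF H.is_monoid] f(1)] by (simp add: o_def)
  then show A: "subgroup A S"
    unfolding A_def by (intro group_hom.img_is_subgroup) (simp add: group_hom_def group_hom_axioms_def groups)
  have "(\<lambda>v. f (\<one>\<^bsub>K\<^esub>, v)) \<in> hom H S"
    using hom_compose[OF DirProd_inr_hom[OF K.is_monoid] f(1)] by (simp add: o_def)
  then show C: "subgroup C S"
    unfolding C_def by (intro group_hom.img_is_subgroup) (simp add: group_hom_def group_hom_axioms_def groups)
  have split: "f (u, v) = f (u, \<one>\<^bsub>H\<^esub>) \<otimes>\<^bsub>S\<^esub> f (\<one>\<^bsub>K\<^esub>, v)" "f (u, v) = f (\<one>\<^bsub>K\<^esub>, v) \<otimes>\<^bsub>S\<^esub> f (u, \<one>\<^bsub>H\<^esub>)"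
    if "u \<in> carrier K" "v \<in> carrier H" for u v
    using hom_mult[OF f(1), of "(u, \<one>\<^bsub>H\<^esub>)" "(\<one>\<^bsub>K\<^esub>, v)"] hom_mult[OF f(1), of "(\<one>\<^bsub>K\<^esub>, v)" "(u, \<one>\<^bsub>H\<^esub>)"] that
    by simp_all
  show "a \<otimes>\<^bsub>S\<^esub> c = c \<otimes>\<^bsub>S\<^esub> a" if a: "a \<in> A" and c: "c \<in> C" for a c
  proof -
    obtain u v where "u \<in> carrier K" "v \<in> carrier H" and "a = f (u, \<one>\<^bsub>H\<^esub>)" "c = f (\<one>\<^bsub>K\<^esub>, v)"
      using a c unfolding A_def C_def by blast
    then show ?thesis
      using split[of u v] by metis
  qed
  show "A <#>\<^bsub>S\<^esub> C = carrier S"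
  proof
    show "A <#>\<^bsub>S\<^esub> C \<subseteq> carrier S"
      using A C by (simp add: S.set_mult_closed subgroup.subset)
    show "carrier S \<subseteq> A <#>\<^bsub>S\<^esub> C"
    proof
      fix s assume "s \<in> carrier S"
      then have "s \<in> f ` carrier (K \<times>\<times> H)"
        using f(2) by simp
      then obtain x where x: "s = f x" "x \<in> carrier (K \<times>\<times> H)"
        by (rule imageE)
      then obtain u v where uv: "u \<in> carrier K" "v \<in> carrier H" "s = f (u, v)"
        by (cases x) auto
      then have "s = f (u, \<one>\<^bsub>H\<^esub>) \<otimes>\<^bsub>S\<^esub> f (\<one>\<^bsub>K\<^esub>, v)"
        using split(1)[OF uv(1,2)] by simp
      then show "s \<in> A <#>\<^bsub>S\<^esub> C"
        using uv unfolding set_mult_def A_def C_def by blast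
    qed
  qed
qed

lemma iso_DirProd_second_factor_into_kernel:
  fixes H :: "'b monoid" and S :: "'a monoid"
  assumes groups: "group K" "group H" "group S"
    and S: "centreless S" "directly_indecomposable S" "\<not> has_direct_factor_iso H S"
    and \<phi>: "\<phi> \<in> iso (K \<times>\<times> H) G"
    and p: "p \<in> hom G S" and \<tau>: "\<tau> \<in> hom S G"
    and retract: "\<And>s. s \<in> carrier S \<Longrightarrow> p (\<tau> s) = s"
    and centralizes: "\<And>s x. s \<in> carrier S \<Longrightarrow> x \<in> kernel G S p \<Longrightarrow> \<tau> s \<otimes>\<^bsub>G\<^esub> x = x \<otimes>\<^bsub>G\<^esub> \<tau> s"
    and h: "h \<in> carrier H"
  shows "p (\<phi> (\<one>\<^bsub>K\<^esub>, h)) = \<one>\<^bsub>S\<^esub>"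
proof -
  let ?A = "(\<lambda>u. p (\<phi> (u, \<one>\<^bsub>H\<^esub>))) ` carrier K" and ?C = "(\<lambda>v. p (\<phi> (\<one>\<^bsub>K\<^esub>, v))) ` carrier H"
  have f_hom: "(\<lambda>x. p (\<phi> x)) \<in> hom (K \<times>\<times> H) S"
    using hom_compose[OF iso_imp_homomorphism[OF \<phi>] p] by (simp add: o_def)
  have f_onto: "(\<lambda>x. p (\<phi> x)) ` carrier (K \<times>\<times> H) = carrier S"
  proof -
    have "p ` carrier G = carrier S"
    proof
      show "p ` carrier G \<subseteq> carrier S"
        using p by (rule hom_carrier)
      show "carrier S \<subseteq> p ` carrier G"
        using retract hom_in_carrier[OF \<tau>] by (metis image_eqI subsetI)
    qed
    then show ?thesis
      using \<phi> by (simp add: iso_iff image_comp[symmetric, unfolded o_def])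
  qed
  note images = DirProd_epi_factor_images[OF groups f_hom f_onto]
  have "?A \<noteq> {\<one>\<^bsub>S\<^esub>}"
  proof
    assume "?A = {\<one>\<^bsub>S\<^esub>}"
    then have "has_direct_factor_iso H S"
      by (intro retract_of_DirProd_is_direct_factor[OF groups \<phi> p \<tau> retract centralizes]) auto
    with S(3) show False ..
  qed
  then have "?C = {\<one>\<^bsub>S\<^esub>}"
    using centreless_directly_indecomposable_commuting_subgroups[OF groups(3) S(1,2) images] by blast
  then show ?thesis
    using h by blast
qed

lemma iso_DirProd_product_group_second_factor:
  fixes Gs :: "'i \<Rightarrow> 'a monoid" and H :: "'b monoid"
  assumes Gs: "\<And>i. i \<in> I \<Longrightarrow> group (Gs i)" "\<And>i. i \<in> I \<Longrightarrow> centreless (Gs i)"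
      "\<And>i. i \<in> I \<Longrightarrow> directly_indecomposable (Gs i)"
    and groups: "group K" "group H"
    and no_factor: "\<And>i. i \<in> I \<Longrightarrow> \<not> has_direct_factor_iso H (Gs i)"
    and \<phi>: "\<phi> \<in> iso (K \<times>\<times> H) (product_group I Gs \<times>\<times> H)"
  shows "\<phi> ` ({\<one>\<^bsub>K\<^esub>} \<times> carrier H) \<subseteq> {\<one>\<^bsub>product_group I Gs\<^esub>} \<times> carrier H"
proof
  let ?P = "product_group I Gs"
  interpret H: group H by fact
  interpret P: group ?P using Gs(1) by simp
  fix x assume "x \<in> \<phi> ` ({\<one>\<^bsub>K\<^esub>} \<times> carrier H)"
  then obtain h where h: "h \<in> carrier H" and x: "x = \<phi> (\<one>\<^bsub>K\<^esub>, h)"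
    by blast
  have coordinate: "fst (\<phi> (\<one>\<^bsub>K\<^esub>, h)) i = \<one>\<^bsub>Gs i\<^esub>" if i: "i \<in> I" for i
  proof -
    let ?single = "\<lambda>s. \<lambda>j\<in>I. if j = i then s else \<one>\<^bsub>Gs j\<^esub>"
    have p: "(\<lambda>x. fst x i) \<in> hom (?P \<times>\<times> H) (Gs i)"
      using hom_compose[OF DirProd_fst_hom[OF P.is_monoid H.is_monoid] product_group_proj_hom[OF i]]
      by (simp add: o_def)
    have \<tau>: "(\<lambda>s. (?single s, \<one>\<^bsub>H\<^esub>)) \<in> hom (Gs i) (?P \<times>\<times> H)"
      using hom_compose[OF product_group_single_hom[OF i Gs(1)] DirProd_inl_hom[OF H.is_monoid]]
      by (simp add: o_def)
    have "(?single s, \<one>\<^bsub>H\<^esub>) \<otimes>\<^bsub>?P \<times>\<times> H\<^esub> x = x \<otimes>\<^bsub>?P \<times>\<times> H\<^esub> (?single s, \<one>\<^bsub>H\<^esub>)"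
      if "s \<in> carrier (Gs i)" "x \<in> kernel (?P \<times>\<times> H) (Gs i) (\<lambda>x. fst x i)" for s x
      using that product_group_single_commute[OF i Gs(1)] by (auto simp: kernel_def simp del: mult_product_group)
    then show ?thesis
      by (intro iso_DirProd_second_factor_into_kernel[OF groups Gs(1) Gs(2,3) no_factor \<phi> p \<tau> _ _ h])
        (simp_all add: i)
  qed
  have "(\<one>\<^bsub>K\<^esub>, h) \<in> carrier (K \<times>\<times> H)"
    using h groups(1) by (simp add: group.is_monoid monoid.one_closed)
  then have image: "\<phi> (\<one>\<^bsub>K\<^esub>, h) \<in> carrier ?P \<times> carrier H"
    using hom_in_carrier[OF iso_imp_homomorphism[OF \<phi>]] by simp
  then have "fst (\<phi> (\<one>\<^bsub>K\<^esub>, h)) j = \<one>\<^bsub>?P\<^esub> j" for j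
    using coordinate PiE_arb[of _ I] by (cases "j \<in> I") (auto simp: mem_Times_iff)
  then have "fst (\<phi> (\<one>\<^bsub>K\<^esub>, h)) = \<one>\<^bsub>?P\<^esub>" ..
  then show "x \<in> {\<one>\<^bsub>?P\<^esub>} \<times> carrier H"
    using image x by (cases x) auto
qed

section \<open>Automorphisms of G \<times> H fixing 1 \<times> H\<close>

lemma aut_image_eq_if_all_aut_image_subset:
  assumes "group G" "A \<subseteq> carrier G" "\<phi> \<in> iso G G"
    and invariant: "\<And>\<psi>. \<psi> \<in> iso G G \<Longrightarrow> \<psi> ` A \<subseteq> A"
  shows "\<phi> ` A = A"
proof
  show "\<phi> ` A \<subseteq> A"
    using assms(3) by (rule invariant)
  have "inv_into (carrier G) \<phi> ` A \<subseteq> A"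
    using group.iso_set_sym[OF assms(1,3)] by (rule invariant)
  then have "\<phi> ` inv_into (carrier G) \<phi> ` A \<subseteq> \<phi> ` A"
    by (rule image_mono)
  moreover have "\<phi> ` inv_into (carrier G) \<phi> ` A = A"
    using assms(2,3) by (simp add: iso_iff image_inv_into_cancel)
  ultimately show "A \<subseteq> \<phi> ` A"
    by simp
qed

lemma hom_DirProd_central_twist:
  assumes "group G" "group H" "group H'"
    and \<alpha>: "\<alpha> \<in> hom G G'" and \<delta>: "\<delta> \<in> hom H H'"
    and \<gamma>: "\<gamma> \<in> hom G H'" "\<gamma> ` carrier G \<subseteq> center H'"
    and \<phi>: "\<And>g h. g \<in> carrier G \<Longrightarrow> h \<in> carrier H \<Longrightarrow> \<phi> (g, h) = (\<alpha> g, \<gamma> g \<otimes>\<^bsub>H'\<^esub> \<delta> h)"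
  shows "\<phi> \<in> hom (G \<times>\<times> H) (G' \<times>\<times> H')"
proof (rule homI)
  interpret G: group G by fact
  interpret H: group H by fact
  interpret H': group H' by fact
  show "\<phi> x \<in> carrier (G' \<times>\<times> H')" if "x \<in> carrier (G \<times>\<times> H)" for x
    using that \<phi> \<alpha> \<gamma>(1) \<delta> by (auto simp: hom_in_carrier)
  show "\<phi> (x \<otimes>\<^bsub>G \<times>\<times> H\<^esub> y) = \<phi> x \<otimes>\<^bsub>G' \<times>\<times> H'\<^esub> \<phi> y"
    if x: "x \<in> carrier (G \<times>\<times> H)" and y: "y \<in> carrier (G \<times>\<times> H)" for x y
  proof -
    obtain g h g' h' where xy: "x = (g, h)" "y = (g', h')" and
      c: "g \<in> carrier G" "h \<in> carrier H" "g' \<in> carrier G" "h' \<in> carrier H"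
      using x y by auto
    have c': "\<gamma> g \<in> carrier H'" "\<gamma> g' \<in> carrier H'" "\<delta> h \<in> carrier H'" "\<delta> h' \<in> carrier H'"
      using c \<gamma>(1) \<delta> by (simp_all add: hom_in_carrier)
    have central: "\<gamma> g' \<otimes>\<^bsub>H'\<^esub> \<delta> h = \<delta> h \<otimes>\<^bsub>H'\<^esub> \<gamma> g'"
      using \<gamma>(2) c(3) c'(3) unfolding center_def by blast
    have "\<gamma> g \<otimes>\<^bsub>H'\<^esub> \<gamma> g' \<otimes>\<^bsub>H'\<^esub> (\<delta> h \<otimes>\<^bsub>H'\<^esub> \<delta> h') = \<gamma> g \<otimes>\<^bsub>H'\<^esub> (\<gamma> g' \<otimes>\<^bsub>H'\<^esub> \<delta> h) \<otimes>\<^bsub>H'\<^esub> \<delta> h'"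
      using c' by (simp add: H'.m_assoc)
    also have "\<dots> = \<gamma> g \<otimes>\<^bsub>H'\<^esub> (\<delta> h \<otimes>\<^bsub>H'\<^esub> \<gamma> g') \<otimes>\<^bsub>H'\<^esub> \<delta> h'"
      by (simp only: central)
    also have "\<dots> = \<gamma> g \<otimes>\<^bsub>H'\<^esub> \<delta> h \<otimes>\<^bsub>H'\<^esub> (\<gamma> g' \<otimes>\<^bsub>H'\<^esub> \<delta> h')"
      using c' by (simp add: H'.m_assoc)
    finally show ?thesis
      using c xy \<phi> \<alpha> \<gamma>(1) \<delta> by (simp add: hom_mult)
  qed
qed

lemma iso_DirProd_central_twist:
  assumes groups: "group G" "group H"
    and \<alpha>: "\<alpha> \<in> iso G G" and \<delta>: "\<delta> \<in> iso H H"
    and \<gamma>: "\<gamma> \<in> hom G H" "\<gamma> ` carrier G \<subseteq> center H"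
    and \<phi>: "\<And>g h. g \<in> carrier G \<Longrightarrow> h \<in> carrier H \<Longrightarrow> \<phi> (g, h) = (\<alpha> g, \<gamma> g \<otimes>\<^bsub>H\<^esub> \<delta> h)"
  shows "\<phi> \<in> iso (G \<times>\<times> H) (G \<times>\<times> H)"
proof -
  interpret G: group G by fact
  interpret H: group H by fact
  interpret \<alpha>: group_hom G G \<alpha> using \<alpha> by (simp add: group_hom_def group_hom_axioms_def iso_imp_homomorphism)
  interpret \<delta>: group_hom H H \<delta> using \<delta> by (simp add: group_hom_def group_hom_axioms_def iso_imp_homomorphism)
  interpret \<gamma>: group_hom G H \<gamma> using \<gamma>(1) by (simp add: group_hom_def group_hom_axioms_def)
  have hom: "\<phi> \<in> hom (G \<times>\<times> H) (G \<times>\<times> H)"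
    using groups groups(2) iso_imp_homomorphism[OF \<alpha>] iso_imp_homomorphism[OF \<delta>] \<gamma> \<phi>
    by (rule hom_DirProd_central_twist)
  interpret \<phi>: group_hom "G \<times>\<times> H" "G \<times>\<times> H" \<phi>
    using hom by (simp add: group_hom_def group_hom_axioms_def DirProd_group groups)
  have "inj_on \<phi> (carrier (G \<times>\<times> H))"
  proof (unfold \<phi>.inj_on_one_iff, intro allI impI)
    fix x assume x: "x \<in> carrier (G \<times>\<times> H)" "\<phi> x = \<one>\<^bsub>G \<times>\<times> H\<^esub>"
    then obtain g h where gh: "x = (g, h)" "g \<in> carrier G" "h \<in> carrier H"
      by auto
    then have 1: "\<alpha> g = \<one>\<^bsub>G\<^esub>" "\<gamma> g \<otimes>\<^bsub>H\<^esub> \<delta> h = \<one>\<^bsub>H\<^esub>"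
      using \<phi> x(2) by simp_all
    have "inj_on \<alpha> (carrier G)" "inj_on \<delta> (carrier H)"
      using \<alpha> \<delta> by (simp_all add: iso_iff)
    then have "g = \<one>\<^bsub>G\<^esub>"
      using gh 1 by (simp add: \<alpha>.inj_on_one_iff)
    then have "\<delta> h = \<one>\<^bsub>H\<^esub>"
      using 1(2) gh(3) by simp
    then have "h = \<one>\<^bsub>H\<^esub>"
      using gh(3) \<open>inj_on \<delta> (carrier H)\<close> \<delta>.inj_on_one_iff by blast
    with \<open>g = \<one>\<^bsub>G\<^esub>\<close> show "x = \<one>\<^bsub>G \<times>\<times> H\<^esub>"
      using gh by simp
  qed
  moreover have "\<phi> ` carrier (G \<times>\<times> H) = carrier (G \<times>\<times> H)"
  proof
    show "\<phi> ` carrier (G \<times>\<times> H) \<subseteq> carrier (G \<times>\<times> H)"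
      using hom by (rule hom_carrier)
    show "carrier (G \<times>\<times> H) \<subseteq> \<phi> ` carrier (G \<times>\<times> H)"
    proof (clarsimp)
      fix g0 h0 assume c: "g0 \<in> carrier G" "h0 \<in> carrier H"
      have "g0 \<in> \<alpha> ` carrier G"
        using \<alpha> c(1) by (simp add: iso_iff)
      then obtain g where g: "g \<in> carrier G" "\<alpha> g = g0"
        by blast
      have "inv\<^bsub>H\<^esub> (\<gamma> g) \<otimes>\<^bsub>H\<^esub> h0 \<in> \<delta> ` carrier H"
        using \<delta> g(1) c(2) by (simp add: iso_iff)
      then obtain h where h: "h \<in> carrier H" "\<delta> h = inv\<^bsub>H\<^esub> (\<gamma> g) \<otimes>\<^bsub>H\<^esub> h0"
        by (metis imageE)
      have "\<phi> (g, h) = (g0, h0)"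
        using \<phi> g h c(2) by (simp flip: H.m_assoc)
      then show "(g0, h0) \<in> \<phi> ` (carrier G \<times> carrier H)"
        using g(1) h(1) by (metis SigmaI image_eqI)
    qed
  qed
  ultimately show ?thesis
    using hom by (simp add: iso_iff)
qed

lemma DirProd_hom_apply_split:
  assumes "monoid G" "monoid H" "\<phi> \<in> hom (G \<times>\<times> H) (G \<times>\<times> H)"
    and "g \<in> carrier G" "h \<in> carrier H" "fst (\<phi> (\<one>\<^bsub>G\<^esub>, h)) = \<one>\<^bsub>G\<^esub>"
  shows "\<phi> (g, h) = (fst (\<phi> (g, \<one>\<^bsub>H\<^esub>)), snd (\<phi> (g, \<one>\<^bsub>H\<^esub>)) \<otimes>\<^bsub>H\<^esub> snd (\<phi> (\<one>\<^bsub>G\<^esub>, h)))"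
proof -
  have "\<phi> (g, h) = \<phi> (g, \<one>\<^bsub>H\<^esub>) \<otimes>\<^bsub>G \<times>\<times> H\<^esub> \<phi> (\<one>\<^bsub>G\<^esub>, h)"
    using hom_mult[OF assms(3), of "(g, \<one>\<^bsub>H\<^esub>)" "(\<one>\<^bsub>G\<^esub>, h)"] assms
    by (simp add: DirProd_mult_inl_inr monoid.one_closed)
  moreover have "fst (\<phi> (g, \<one>\<^bsub>H\<^esub>)) \<in> carrier G"
    using hom_in_carrier[OF assms(3), of "(g, \<one>\<^bsub>H\<^esub>)"] assms by (simp add: monoid.one_closed mem_Times_iff)
  ultimately show ?thesis
    using assms(1,6) by (cases "\<phi> (g, \<one>\<^bsub>H\<^esub>)", cases "\<phi> (\<one>\<^bsub>G\<^esub>, h)") (simp add: monoid.r_one)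
qed

lemma aut_DirProd_second_factor_restriction_iso:
  assumes groups: "group G" "group H"
    and \<phi>: "\<phi> \<in> iso (G \<times>\<times> H) (G \<times>\<times> H)"
    and invariant: "\<phi> ` ({\<one>\<^bsub>G\<^esub>} \<times> carrier H) = {\<one>\<^bsub>G\<^esub>} \<times> carrier H"
  shows "(\<lambda>h. snd (\<phi> (\<one>\<^bsub>G\<^esub>, h))) \<in> iso H H"
    and "\<And>h. h \<in> carrier H \<Longrightarrow> \<phi> (\<one>\<^bsub>G\<^esub>, h) = (\<one>\<^bsub>G\<^esub>, snd (\<phi> (\<one>\<^bsub>G\<^esub>, h)))"
proof -
  interpret G: group G by fact
  interpret H: group H by fact
  have \<phi>_inj: "inj_on \<phi> (carrier (G \<times>\<times> H))"
    using \<phi> by (simp add: iso_iff)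
  let ?\<delta> = "\<lambda>h. snd (\<phi> (\<one>\<^bsub>G\<^esub>, h))"
  show inr: "\<phi> (\<one>\<^bsub>G\<^esub>, h) = (\<one>\<^bsub>G\<^esub>, ?\<delta> h)" if "h \<in> carrier H" for h
  proof -
    have "\<phi> (\<one>\<^bsub>G\<^esub>, h) \<in> \<phi> ` ({\<one>\<^bsub>G\<^esub>} \<times> carrier H)"
      using that by simp
    then have "\<phi> (\<one>\<^bsub>G\<^esub>, h) \<in> {\<one>\<^bsub>G\<^esub>} \<times> carrier H"
      by (simp only: invariant)
    then show ?thesis
      by (cases "\<phi> (\<one>\<^bsub>G\<^esub>, h)") auto
  qed
  have "snd \<circ> (\<phi> \<circ> (\<lambda>h. (\<one>\<^bsub>G\<^esub>, h))) \<in> hom H H"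
    using hom_compose[OF hom_compose[OF DirProd_inr_hom[OF G.is_monoid] iso_imp_homomorphism[OF \<phi>]]
        DirProd_snd_hom[OF G.is_monoid H.is_monoid]] .
  then have \<delta>: "?\<delta> \<in> hom H H"
    by (simp add: o_def)
  moreover have "inj_on ?\<delta> (carrier H)"
  proof (rule inj_onI)
    fix x y assume xy: "x \<in> carrier H" "y \<in> carrier H" "?\<delta> x = ?\<delta> y"
    then have "\<phi> (\<one>\<^bsub>G\<^esub>, x) = \<phi> (\<one>\<^bsub>G\<^esub>, y)"
      using inr[OF xy(1)] inr[OF xy(2)] by metis
    then have "(\<one>\<^bsub>G\<^esub>, x) = (\<one>\<^bsub>G\<^esub>, y)"
      by (rule inj_onD[OF \<phi>_inj]) (use xy in simp_all)
    then show "x = y"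
      by simp
  qed
  moreover have "?\<delta> ` carrier H = carrier H"
  proof
    show "?\<delta> ` carrier H \<subseteq> carrier H"
      using \<delta> by (rule hom_carrier)
    show "carrier H \<subseteq> ?\<delta> ` carrier H"
    proof
      fix h assume "h \<in> carrier H"
      then have "(\<one>\<^bsub>G\<^esub>, h) \<in> \<phi> ` ({\<one>\<^bsub>G\<^esub>} \<times> carrier H)"
        by (simp only: invariant) simp
      then obtain h' where "h' \<in> carrier H" "(\<one>\<^bsub>G\<^esub>, h) = \<phi> (\<one>\<^bsub>G\<^esub>, h')"
        by blast
      then show "h \<in> ?\<delta> ` carrier H"
        by (metis image_eqI snd_conv)
    qed
  qed
  ultimately show "?\<delta> \<in> iso H H"
    by (simp add: iso_iff)
qed

lemma aut_DirProd_first_factor_quotient_iso: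
  assumes groups: "group G" "group H"
    and \<phi>: "\<phi> \<in> iso (G \<times>\<times> H) (G \<times>\<times> H)"
    and invariant: "\<phi> ` ({\<one>\<^bsub>G\<^esub>} \<times> carrier H) = {\<one>\<^bsub>G\<^esub>} \<times> carrier H"
  shows "(\<lambda>g. fst (\<phi> (g, \<one>\<^bsub>H\<^esub>))) \<in> iso G G"
proof -
  interpret G: group G by fact
  interpret H: group H by fact
  let ?\<alpha> = "\<lambda>g. fst (\<phi> (g, \<one>\<^bsub>H\<^esub>))"
  have \<phi>_hom: "\<phi> \<in> hom (G \<times>\<times> H) (G \<times>\<times> H)" and \<phi>_inj: "inj_on \<phi> (carrier (G \<times>\<times> H))"
    and \<phi>_surj: "\<phi> ` carrier (G \<times>\<times> H) = carrier (G \<times>\<times> H)"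
    using \<phi> by (simp_all add: iso_iff)
  have "fst \<circ> (\<phi> \<circ> (\<lambda>g. (g, \<one>\<^bsub>H\<^esub>))) \<in> hom G G"
    using hom_compose[OF hom_compose[OF DirProd_inl_hom[OF H.is_monoid] \<phi>_hom]
        DirProd_fst_hom[OF G.is_monoid H.is_monoid]] .
  then interpret \<alpha>: group_hom G G ?\<alpha>
    by (simp add: group_hom_def group_hom_axioms_def o_def groups)
  have "inj_on ?\<alpha> (carrier G)"
  proof (unfold \<alpha>.inj_on_one_iff, intro allI impI)
    fix u assume u: "u \<in> carrier G" "?\<alpha> u = \<one>\<^bsub>G\<^esub>"
    then have "\<phi> (u, \<one>\<^bsub>H\<^esub>) \<in> {\<one>\<^bsub>G\<^esub>} \<times> carrier H"
      using hom_in_carrier[OF \<phi>_hom, of "(u, \<one>\<^bsub>H\<^esub>)"] by (cases "\<phi> (u, \<one>\<^bsub>H\<^esub>)") auto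
    then have "\<phi> (u, \<one>\<^bsub>H\<^esub>) \<in> \<phi> ` ({\<one>\<^bsub>G\<^esub>} \<times> carrier H)"
      by (simp only: invariant)
    then obtain x where x: "\<phi> (u, \<one>\<^bsub>H\<^esub>) = \<phi> x" "x \<in> {\<one>\<^bsub>G\<^esub>} \<times> carrier H"
      by (rule imageE)
    have "(u, \<one>\<^bsub>H\<^esub>) = x"
      using x(1) by (rule inj_onD[OF \<phi>_inj]) (use u x(2) in auto)
    then show "u = \<one>\<^bsub>G\<^esub>"
      using x(2) by auto
  qed
  moreover have "carrier G \<subseteq> ?\<alpha> ` carrier G"
  proof
    fix g assume g: "g \<in> carrier G"
    then have "(g, \<one>\<^bsub>H\<^esub>) \<in> \<phi> ` carrier (G \<times>\<times> H)"
      using \<phi>_surj by simp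
    then obtain u v where uv: "(g, \<one>\<^bsub>H\<^esub>) = \<phi> (u, v)" "(u, v) \<in> carrier (G \<times>\<times> H)"
      by (metis imageE surj_pair)
    then have uv: "u \<in> carrier G" "v \<in> carrier H" "(g, \<one>\<^bsub>H\<^esub>) = \<phi> (u, v)"
      by auto
    have "fst (\<phi> (\<one>\<^bsub>G\<^esub>, v)) = \<one>\<^bsub>G\<^esub>"
      using aut_DirProd_second_factor_restriction_iso(2)[OF groups \<phi> invariant uv(2)] by (metis fst_conv)
    then have "g = ?\<alpha> u"
      using DirProd_hom_apply_split[OF G.is_monoid H.is_monoid \<phi>_hom uv(1,2)] uv(3) by (metis fst_conv)
    then show "g \<in> ?\<alpha> ` carrier G"
      using uv(1) by blast
  qed
  ultimately show ?thesis
    using \<alpha>.homh \<alpha>.hom_closed by (auto simp: iso_iff)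
qed

lemma aut_DirProd_decomposition:
  assumes groups: "group G" "group H"
    and \<phi>: "\<phi> \<in> iso (G \<times>\<times> H) (G \<times>\<times> H)"
    and invariant: "\<phi> ` ({\<one>\<^bsub>G\<^esub>} \<times> carrier H) = {\<one>\<^bsub>G\<^esub>} \<times> carrier H"
  shows "\<exists>\<alpha> \<delta> \<gamma>. \<alpha> \<in> iso G G \<and> \<delta> \<in> iso H H \<and> \<gamma> \<in> hom G H \<and> \<gamma> ` carrier G \<subseteq> center H \<and>
           (\<forall>g \<in> carrier G. \<forall>h \<in> carrier H. \<phi> (g, h) = (\<alpha> g, \<gamma> g \<otimes>\<^bsub>H\<^esub> \<delta> h))"
proof -
  interpret G: group G by fact
  interpret H: group H by fact
  have \<phi>_hom: "\<phi> \<in> hom (G \<times>\<times> H) (G \<times>\<times> H)"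
    using \<phi> by (rule iso_imp_homomorphism)
  define \<alpha> where "\<alpha> = (\<lambda>g. fst (\<phi> (g, \<one>\<^bsub>H\<^esub>)))"
  define \<gamma> where "\<gamma> = (\<lambda>g. snd (\<phi> (g, \<one>\<^bsub>H\<^esub>)))"
  define \<delta> where "\<delta> = (\<lambda>h. snd (\<phi> (\<one>\<^bsub>G\<^esub>, h)))"
  have \<alpha>: "\<alpha> \<in> iso G G"
    unfolding \<alpha>_def using groups \<phi> invariant by (rule aut_DirProd_first_factor_quotient_iso)
  have \<delta>: "\<delta> \<in> iso H H" and inr: "\<And>h. h \<in> carrier H \<Longrightarrow> \<phi> (\<one>\<^bsub>G\<^esub>, h) = (\<one>\<^bsub>G\<^esub>, \<delta> h)"
    unfolding \<delta>_def using aut_DirProd_second_factor_restriction_iso[OF groups \<phi> invariant] by auto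
  have "snd \<circ> (\<phi> \<circ> (\<lambda>g. (g, \<one>\<^bsub>H\<^esub>))) \<in> hom G H"
    using hom_compose[OF hom_compose[OF DirProd_inl_hom[OF H.is_monoid] \<phi>_hom]
        DirProd_snd_hom[OF G.is_monoid H.is_monoid]] .
  then have \<gamma>: "\<gamma> \<in> hom G H"
    by (simp add: \<gamma>_def o_def)
  have form: "\<phi> (g, h) = (\<alpha> g, \<gamma> g \<otimes>\<^bsub>H\<^esub> \<delta> h)" if "g \<in> carrier G" "h \<in> carrier H" for g h
  proof -
    have "fst (\<phi> (\<one>\<^bsub>G\<^esub>, h)) = \<one>\<^bsub>G\<^esub>"
      using inr[OF that(2)] by simp
    then show ?thesis
      using DirProd_hom_apply_split[OF G.is_monoid H.is_monoid \<phi>_hom that] by (simp add: \<alpha>_def \<gamma>_def \<delta>_def)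
  qed
  have "\<gamma> g \<in> center H" if g: "g \<in> carrier G" for g
    unfolding center_def
  proof (intro CollectI conjI ballI)
    show "\<gamma> g \<in> carrier H"
      using \<gamma> g by (rule hom_in_carrier)
    fix x assume "x \<in> carrier H"
    then obtain h where h: "h \<in> carrier H" "x = \<delta> h"
      using \<delta> by (auto simp: iso_iff)
    have "\<phi> (g, h) = \<phi> (\<one>\<^bsub>G\<^esub>, h) \<otimes>\<^bsub>G \<times>\<times> H\<^esub> \<phi> (g, \<one>\<^bsub>H\<^esub>)"
      using hom_mult[OF \<phi>_hom, of "(\<one>\<^bsub>G\<^esub>, h)" "(g, \<one>\<^bsub>H\<^esub>)"] g h(1) by simp
    then have "\<gamma> g \<otimes>\<^bsub>H\<^esub> \<delta> h = \<delta> h \<otimes>\<^bsub>H\<^esub> \<gamma> g"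
      using form[OF g h(1)] inr[OF h(1)] by (cases "\<phi> (g, \<one>\<^bsub>H\<^esub>)") (simp add: \<alpha>_def \<gamma>_def)
    then show "\<gamma> g \<otimes>\<^bsub>H\<^esub> x = x \<otimes>\<^bsub>H\<^esub> \<gamma> g"
      using h(2) by simp
  qed
  then show ?thesis
    using \<alpha> \<delta> \<gamma> form by blast
qed

theorem mainTheorem17:
  fixes Gs :: "nat \<Rightarrow> 'a monoid" and H :: "'b monoid" and n :: nat
  assumes "\<And>i. i < n \<Longrightarrow> group (Gs i)"
    and "\<And>i. i < n \<Longrightarrow> nontrivial_group (Gs i)"
    and "\<And>i. i < n \<Longrightarrow> centreless (Gs i)"
    and "\<And>i. i < n \<Longrightarrow> directly_indecomposable (Gs i)"
    and "group H" and "nontrivial_group H"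
    and "\<And>i. i < n \<Longrightarrow> \<not> has_direct_factor_iso H (Gs i)"
  defines "G \<equiv> product_group {..<n} Gs"
  shows "(\<forall>\<phi>. \<phi> \<in> iso (G \<times>\<times> H) (G \<times>\<times> H) \<longleftrightarrow>
            (\<exists>\<alpha> \<delta> \<gamma>. \<alpha> \<in> iso G G \<and> \<delta> \<in> iso H H \<and> \<gamma> \<in> hom G H \<and>
               \<gamma> ` carrier G \<subseteq> center H \<and>
               (\<forall>g \<in> carrier G. \<forall>h \<in> carrier H. \<phi> (g, h) = (\<alpha> g, \<gamma> g \<otimes>\<^bsub>H\<^esub> \<delta> h))))
         \<and> (\<forall>\<phi> \<in> iso (G \<times>\<times> H) (G \<times>\<times> H).
               \<phi> ` ({\<one>\<^bsub>G\<^esub>} \<times> carrier H) = {\<one>\<^bsub>G\<^esub>} \<times> carrier H)"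
proof -
  note H = assms(5)
  have G: "group G"
    unfolding G_def by (rule product_group) (simp add: assms(1))
  have invariant: "\<psi> ` ({\<one>\<^bsub>G\<^esub>} \<times> carrier H) \<subseteq> {\<one>\<^bsub>G\<^esub>} \<times> carrier H"
    if "\<psi> \<in> iso (G \<times>\<times> H) (G \<times>\<times> H)" for \<psi>
    unfolding G_def by (rule iso_DirProd_product_group_second_factor) (use assms that G in \<open>simp_all add: G_def\<close>)
  have characteristic: "\<phi> ` ({\<one>\<^bsub>G\<^esub>} \<times> carrier H) = {\<one>\<^bsub>G\<^esub>} \<times> carrier H"
    if "\<phi> \<in> iso (G \<times>\<times> H) (G \<times>\<times> H)" for \<phi>
    by (rule aut_image_eq_if_all_aut_image_subset[OF DirProd_group[OF G H] _ that])
      (use monoid.one_closed[OF group.is_monoid[OF G]] invariant in auto)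
  show ?thesis
    using characteristic aut_DirProd_decomposition[OF G H] iso_DirProd_central_twist[OF G H]
    by (metis (no_types, lifting))
qed

end
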